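(* Let $k\in\mathbb{Z}$ and $\imath\in\mathbb{Z}_{>1}$. The rational polygon $\mathrm{conv}((0,0),(k+1/2,\imath),(k+4/5,\imath))$ contains no lattice point other than $(0,0)$ if and only if it is lattice equivalent to one of $\mathrm{conv}((0,0),(-1/2,\imath),(-1/5,\imath))$, $\mathrm{conv}((0,0),(1/2,\imath),(4/5,\imath))$, or, only when $\imath$ is even, $\mathrm{conv}((0,0),(\tfrac{\imath}{2}-\tfrac12,\imath),(\tfrac{\imath}{2}-\tfrac15,\imath))$.
   Context: Lattice equivalence means equivalence under maps $v\mapsto Av+w$ with $A\in\mathrm{GL}_2(\mathbb{Z})$ and $w\in\mathbb{Z}^2$. *)

theory Defs
  imports "HOL-Analysis.Analysis"
begin

definition lattice_point :: "real \<times> real \<Rightarrow> bool" where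
  "lattice_point p \<longleftrightarrow> fst p \<in> \<int> \<and> snd p \<in> \<int>"

definition int_affine_map ::
  "int \<Rightarrow> int \<Rightarrow> int \<Rightarrow> int \<Rightarrow> int \<Rightarrow> int \<Rightarrow> real \<times> real \<Rightarrow> real \<times> real" where
  "int_affine_map a b c d e f p =
     (of_int a * fst p + of_int b * snd p + of_int e,
      of_int c * fst p + of_int d * snd p + of_int f)"

definition lattice_equiv :: "(real \<times> real) set \<Rightarrow> (real \<times> real) set \<Rightarrow> bool" where
  "lattice_equiv P Q \<longleftrightarrow>
     (\<exists>a b c d e f. \<bar>a * d - b * c\<bar> = 1 \<and> int_affine_map a b c d e f ` P = Q)"

end

theory Submission
  imports Defs
begin

text \<open>
  A lattice point (X, Y) with 0 < Y < i lies in the triangle iff the slope X/Y lies in the window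
  [(2k+1)/2i, (5k+4)/5i]; the rows Y = 0 and Y = i contain only the origin. Shearing by
  (x, y) \<mapsto> (x - m y, y) replaces k by k - m i, so only r = k mod i matters. For r = 0,
  r = i - 1 and 2r + 2 = i the window would force i X, i (X - Y + 1), resp. i (2X - Y + 1)
  strictly between 0 and i, which is impossible; for every other residue an explicit lattice
  point is exhibited. Conversely, affine unimodular maps are injective and preserve the lattice,
  so lattice-freeness transfers back from the three normal forms.
\<close>

lemma mem_convex_hull_apex_segment:
  fixes a b h x y :: real
  assumes ab: "a < b" and h: "h > 0"
  shows "(x, y) \<in> convex hull {(0,0), (a,h), (b,h)} \<longleftrightarrow>
         0 \<le> y \<and> y \<le> h \<and> a * y \<le> h * x \<and> h * x \<le> b * y"
proof
  assume "(x, y) \<in> convex hull {(0,0), (a,h), (b,h)}"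
  then obtain u v where uv: "0 \<le> u" "0 \<le> v" "u + v \<le> 1"
    and x: "x = u * a + v * b" and y: "y = u * h + v * h"
    unfolding convex_hull_3_alt by auto
  have "(u + v) * h \<le> h" using uv h by (simp add: mult_left_le_one_le)
  moreover have "v * a * h \<le> v * b * h" "u * a * h \<le> u * b * h"
    using uv h ab by (simp_all add: mult_right_mono mult_left_mono)
  ultimately show "0 \<le> y \<and> y \<le> h \<and> a * y \<le> h * x \<and> h * x \<le> b * y"
    using uv h unfolding x y by (simp add: algebra_simps)
next
  assume A: "0 \<le> y \<and> y \<le> h \<and> a * y \<le> h * x \<and> h * x \<le> b * y"
  have pos: "h * (b - a) > 0" using ab h by simp
  define u where "u = (b * y - h * x) / (h * (b - a))"
  define v where "v = (h * x - a * y) / (h * (b - a))"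
  have "u + v = (y * (b - a)) / (h * (b - a))"
    unfolding u_def v_def by (simp only: add_divide_distrib[symmetric]) (simp add: algebra_simps)
  moreover have "u * a + v * b = (x * (h * (b - a))) / (h * (b - a))"
    unfolding u_def v_def
    by (simp only: times_divide_eq_left add_divide_distrib[symmetric]) (simp add: algebra_simps)
  ultimately have uv: "u + v = y / h" and x: "u * a + v * b = x" using ab h by simp_all
  have "u + v \<le> 1" "0 \<le> u" "0 \<le> v" using A h pos unfolding uv by (simp_all add: u_def v_def)
  moreover have "(x, y) = (0,0) + u *\<^sub>R ((a,h) - (0,0)) + v *\<^sub>R ((b,h) - (0,0))"
    using uv x h by (simp add: field_simps)
  ultimately show "(x, y) \<in> convex hull {(0,0), (a,h), (b,h)}"
    unfolding convex_hull_3_alt by blast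
qed

text \<open>(X, Y) lies in the cone over the top edge of the triangle, with denominators cleared.\<close>

definition slope_window :: "int \<Rightarrow> int \<Rightarrow> int \<Rightarrow> int \<Rightarrow> bool" where
  "slope_window i k X Y \<longleftrightarrow> (2*k + 1) * Y \<le> 2*i*X \<and> 5*i*X \<le> (5*k + 4) * Y"

definition strip_lattice_point :: "int \<Rightarrow> int \<Rightarrow> bool" where
  "strip_lattice_point i k \<longleftrightarrow> (\<exists>X Y. 1 \<le> Y \<and> Y \<le> i - 1 \<and> slope_window i k X Y)"

lemma slope_window_shift: "slope_window i (k + m*i) (X + m*Y) Y \<longleftrightarrow> slope_window i k X Y"
  unfolding slope_window_def by (simp add: algebra_simps)

lemma strip_lattice_point_shift: "strip_lattice_point i (k + m*i) \<longleftrightarrow> strip_lattice_point i k"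
proof
  assume "strip_lattice_point i (k + m*i)"
  then obtain X Y where "1 \<le> Y" "Y \<le> i - 1" "slope_window i (k + m*i) (X - m*Y + m*Y) Y"
    unfolding strip_lattice_point_def by auto
  then show "strip_lattice_point i k"
    unfolding strip_lattice_point_def slope_window_shift by blast
next
  assume "strip_lattice_point i k"
  then show "strip_lattice_point i (k + m*i)"
    unfolding strip_lattice_point_def by (metis slope_window_shift)
qed

lemma strip_lattice_point_mod: "strip_lattice_point i k \<longleftrightarrow> strip_lattice_point i (k mod i)"
  using strip_lattice_point_shift[of i "k mod i" "k div i"] by simp

text \<open>
  The witness is (r + 1, i) - n (1, q): starting from the lattice point just right of the top
  edge, n steps along (1, q) lead into the triangle.
\<close>

lemma strip_lattice_point_witness:
  fixes i r q :: int
  assumes q: "q \<ge> 1" and D_lower: "2*q - 1 \<le> i - q*r" and D_upper: "q < i - q*r"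
    and E_upper: "2*(i - q*r) - q \<le> i"
  shows "strip_lattice_point i r"
proof -
  define D where "D = i - q*r"
  define E where "E = 2*D - q"
  define n where "n = i div E"
  have "E > q" using D_upper q unfolding E_def D_def by auto
  then have "i = n*E + i mod E" "0 \<le> i mod E" "i mod E < E"
    unfolding n_def using q by (simp_all add: mult.commute)
  then have nE: "n*E \<le> i" "i < (n + 1)*E" by (simp_all add: algebra_simps)
  have n: "n \<ge> 1"
  proof (rule ccontr)
    assume "\<not> n \<ge> 1"
    then have "(n + 1)*E \<le> E" using \<open>E > q\<close> q by (simp add: mult_right_mono)
    then show False using nE E_upper unfolding E_def D_def by linarith
  qed
  define X where "X = r + 1 - n"
  define Y where "Y = i - n*q"
  have "n*q < n*E" using n \<open>E > q\<close> by simp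
  moreover have "n*q \<ge> 1*1" using n q by (intro mult_mono) auto
  ultimately have Y: "1 \<le> Y" "Y \<le> i - 1" unfolding Y_def using nE by linarith+
  have "(3*n - 2)*(D - 2*q + 1) \<ge> 0" "(n - 1)*(q - 1) \<ge> 0"
    using n q D_lower unfolding D_def by simp_all
  moreover have "(5*r + 4)*Y - 5*i*X - ((n + 1)*E - i - 1)
      = (3*n - 2)*(D - 2*q + 1) + 3*((n - 1)*(q - 1))"
    "2*i*X - (2*r + 1)*Y = i - n*E"
    unfolding X_def Y_def E_def D_def by (simp_all add: algebra_simps)
  ultimately have "slope_window i r X Y" unfolding slope_window_def using nE by linarith
  then show ?thesis unfolding strip_lattice_point_def using Y by blast
qed

lemma strip_lattice_point_residue:
  fixes i r :: int
  assumes r1: "1 \<le> r" and r2: "r \<le> i - 2" and ne: "2*r + 2 \<noteq> i"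
  shows "strip_lattice_point i r"
proof -
  consider "i \<le> 2*r + 1" | "2*r + 3 \<le> i" "i \<le> 4*r + 2" | "4*r + 3 \<le> i" "r \<ge> 2"
    | "r = 1" "i \<ge> 7"
    using r1 ne by linarith
  then show ?thesis
  proof cases
    case 1
    show ?thesis by (rule strip_lattice_point_witness[of 1]) (use 1 r2 in auto)
  next
    case 2
    show ?thesis by (rule strip_lattice_point_witness[of 2]) (use 2 in auto)
  next
    case 3
    define q where "q = (i + 2*r) div (2*r + 1)"
    have "i + 2*r = q*(2*r + 1) + (i + 2*r) mod (2*r + 1)"
      "0 \<le> (i + 2*r) mod (2*r + 1)" "(i + 2*r) mod (2*r + 1) < 2*r + 1"
      unfolding q_def using r1 pos_mod_bound[of "2*r + 1" "i + 2*r"] by (simp_all add: mult.commute)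
    then have a1: "q*(2*r + 1) \<le> i + 2*r" and a2: "i \<le> q*(2*r + 1)" by linarith+
    have q2: "q \<ge> 2"
    proof (rule ccontr)
      assume "\<not> q \<ge> 2"
      then have "q*(2*r + 1) \<le> 1*(2*r + 1)" using r1 by (intro mult_right_mono) auto
      then have "q*(2*r + 1) \<le> 2*r + 1" by simp
      then show False using a2 3 by linarith
    qed
    have "(i + 1)*(2*r + 1) - (i + 2*r)*(r + 2) = (i - (4*r + 3))*(r - 1) + (2*r + 1)*(r - 2)"
      by (simp add: algebra_simps)
    moreover have "(i - (4*r + 3))*(r - 1) \<ge> 0" "(2*r + 1)*(r - 2) \<ge> 0" using 3 by simp_all
    moreover have "q*(2*r + 1)*(r + 2) \<le> (i + 2*r)*(r + 2)" using a1 3 by (intro mult_right_mono) auto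
    ultimately have "(2*r + 1)*(q*(r + 2)) \<le> (2*r + 1)*(i + 1)" by (simp add: algebra_simps)
    then have b: "q*(r + 2) \<le> i + 1" using r1 by simp
    show ?thesis
      by (rule strip_lattice_point_witness[of q]) (use q2 a2 b in \<open>simp_all add: algebra_simps\<close>)
  next
    case 4
    have "3*((2*i) div 3) \<le> 2*i" "2*i < 3*((2*i) div 3) + 3" by linarith+
    then have "slope_window i r 1 ((2*i) div 3)" "1 \<le> (2*i) div 3" "(2*i) div 3 \<le> i - 1"
      unfolding slope_window_def using 4 by simp_all
    then show ?thesis unfolding strip_lattice_point_def by blast
  qed
qed

lemma no_int_multiple_strictly_between:
  fixes i z :: int
  shows "\<not> (0 < i*z \<and> i*z < i)"
proof
  assume *: "0 < i*z \<and> i*z < i"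
  then have "i > 0" by linarith
  then have "z \<ge> 1" using * zero_less_mult_pos by fastforce
  then have "i*z \<ge> i" using \<open>i > 0\<close> by simp
  then show False using * by linarith
qed

lemma not_strip_lattice_point_zero: "\<not> strip_lattice_point i 0"
proof
  assume "strip_lattice_point i 0"
  then obtain X Y where "1 \<le> Y" "Y \<le> i - 1" "Y \<le> 2*(i*X)" "5*(i*X) \<le> 4*Y"
    unfolding strip_lattice_point_def slope_window_def by (auto simp: algebra_simps)
  then show False using no_int_multiple_strictly_between[of i X] by linarith
qed

lemma not_strip_lattice_point_minus_one: "\<not> strip_lattice_point i (i - 1)"
proof
  assume "strip_lattice_point i (i - 1)"
  then obtain X Y where "1 \<le> Y" "Y \<le> i - 1"
    "(2*(i - 1) + 1)*Y \<le> 2*i*X" "5*i*X \<le> (5*(i - 1) + 4)*Y"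
    unfolding strip_lattice_point_def slope_window_def by auto
  moreover have "2*i*X - (2*(i - 1) + 1)*Y = 2*(i*(X - Y + 1)) - 2*i + Y"
    "5*i*X - (5*(i - 1) + 4)*Y = 5*(i*(X - Y + 1)) - 5*i + Y"
    by (simp_all add: algebra_simps)
  ultimately show False using no_int_multiple_strictly_between[of i "X - Y + 1"] by linarith
qed

lemma not_strip_lattice_point_half:
  assumes "2*r + 2 = i"
  shows "\<not> strip_lattice_point i r"
proof
  assume "strip_lattice_point i r"
  then obtain X Y where "1 \<le> Y" "Y \<le> i - 1" "(2*r + 1)*Y \<le> 2*i*X" "5*i*X \<le> (5*r + 4)*Y"
    unfolding strip_lattice_point_def slope_window_def by auto
  moreover have "2*i*X - (2*r + 1)*Y = i*(2*X - Y + 1) - i + Y"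
    "2*(5*i*X - (5*r + 4)*Y) = 5*(i*(2*X - Y + 1)) - 5*i + 2*Y"
    by (simp_all add: algebra_simps flip: assms)
  ultimately show False using no_int_multiple_strictly_between[of i "2*X - Y + 1"] by (smt (verit))
qed

lemma strip_lattice_point_iff:
  assumes "i > 1"
  shows "\<not> strip_lattice_point i k \<longleftrightarrow> k mod i = 0 \<or> k mod i = i - 1 \<or> 2*(k mod i) + 2 = i"
proof -
  have "0 \<le> k mod i" "k mod i < i" using assms by simp_all
  then show ?thesis
    using strip_lattice_point_mod[of i k] strip_lattice_point_residue[of "k mod i" i]
      not_strip_lattice_point_zero[of i] not_strip_lattice_point_minus_one[of i]
      not_strip_lattice_point_half[of "k mod i" i]
    by fastforce
qed

definition tri :: "int \<Rightarrow> int \<Rightarrow> (real \<times> real) set" where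
  "tri i k = convex hull {(0, 0), (of_int k + 1/2, of_int i), (of_int k + 4/5, of_int i)}"

lemma int_point_mem_tri_iff:
  assumes "i > 0"
  shows "(of_int X, of_int Y) \<in> tri i k \<longleftrightarrow> 0 \<le> Y \<and> Y \<le> i \<and> slope_window i k X Y"
proof -
  have "(of_int k + 1/2) * (of_int Y::real) \<le> of_int i * of_int X
      \<longleftrightarrow> of_int ((2*k + 1)*Y) \<le> (of_int (2*i*X)::real)"
    "of_int i * of_int X \<le> (of_int k + 4/5) * (of_int Y::real)
      \<longleftrightarrow> (of_int (5*i*X)::real) \<le> of_int ((5*k + 4)*Y)"
    by (simp_all add: field_simps)
  then show ?thesis
    unfolding tri_def slope_window_def using assms
    by (subst mem_convex_hull_apex_segment) (simp_all only: of_int_le_iff, auto)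
qed

lemma zero_mem_tri: "(0,0) \<in> tri i k"
  unfolding tri_def by (rule hull_inc) simp

lemma slope_window_bottom_row: "i > 0 \<Longrightarrow> slope_window i k X 0 \<Longrightarrow> X = 0"
  unfolding slope_window_def by (simp add: mult_le_0_iff zero_le_mult_iff)

lemma not_slope_window_top_row: "i > 0 \<Longrightarrow> \<not> slope_window i k X i"
proof
  assume "i > 0" "slope_window i k X i"
  then have "i*(2*k + 1) \<le> i*(2*X) \<and> i*(5*X) \<le> i*(5*k + 4)"
    unfolding slope_window_def by (simp add: algebra_simps)
  then have "2*k + 1 \<le> 2*X \<and> 5*X \<le> 5*k + 4" using \<open>i > 0\<close> by simp
  then show False by presburger
qed

lemma lattice_points_eq_origin_iff:
  "P \<inter> {p. lattice_point p} = {(0,0)} \<longleftrightarrow>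
    (0,0) \<in> P \<and> (\<forall>X Y. (of_int X, of_int Y) \<in> P \<longrightarrow> X = 0 \<and> Y = 0)"
proof
  assume lattice_free: "P \<inter> {p. lattice_point p} = {(0,0)}"
  have "(of_int X, of_int Y) = (0::real, 0::real)" if "(of_int X, of_int Y) \<in> P" for X Y
  proof -
    have "lattice_point (of_int X, of_int Y)" unfolding lattice_point_def by simp
    then show ?thesis using that lattice_free by blast
  qed
  then show "(0,0) \<in> P \<and> (\<forall>X Y. (of_int X, of_int Y) \<in> P \<longrightarrow> X = 0 \<and> Y = 0)"
    using lattice_free by auto
next
  assume only_origin: "(0,0) \<in> P \<and> (\<forall>X Y. (of_int X, of_int Y) \<in> P \<longrightarrow> X = 0 \<and> Y = 0)"
  have "p = (0,0)" if "p \<in> P" "lattice_point p" for p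
  proof -
    obtain X Y where "fst p = of_int X" "snd p = of_int Y"
      using \<open>lattice_point p\<close> unfolding lattice_point_def by (auto elim!: Ints_cases)
    then have "p = (of_int X, of_int Y)" by (simp add: prod_eq_iff)
    then show ?thesis using that(1) only_origin by simp
  qed
  moreover have "lattice_point (0::real, 0::real)" unfolding lattice_point_def by simp
  ultimately show "P \<inter> {p. lattice_point p} = {(0,0)}" using only_origin by auto
qed

lemma tri_lattice_free_iff:
  assumes i: "i > 1"
  shows "tri i k \<inter> {p. lattice_point p} = {(0,0)} \<longleftrightarrow> \<not> strip_lattice_point i k"
  unfolding lattice_points_eq_origin_iff strip_lattice_point_def
proof
  assume only_origin: "(0,0) \<in> tri i k \<and> (\<forall>X Y. (of_int X, of_int Y) \<in> tri i k \<longrightarrow> X = 0 \<and> Y = 0)"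
  show "\<nexists>X Y. 1 \<le> Y \<and> Y \<le> i - 1 \<and> slope_window i k X Y"
  proof
    assume "\<exists>X Y. 1 \<le> Y \<and> Y \<le> i - 1 \<and> slope_window i k X Y"
    then obtain X Y where "1 \<le> Y" "Y \<le> i - 1" "slope_window i k X Y" by blast
    then have "(of_int X, of_int Y) \<in> tri i k" using int_point_mem_tri_iff[of i] i by simp
    then have "Y = 0" using only_origin by blast
    then show False using \<open>1 \<le> Y\<close> by simp
  qed
next
  assume no_strip: "\<nexists>X Y. 1 \<le> Y \<and> Y \<le> i - 1 \<and> slope_window i k X Y"
  have "X = 0 \<and> Y = 0" if "(of_int X, of_int Y) \<in> tri i k" for X Y
  proof -
    have "0 \<le> Y" "Y \<le> i" "slope_window i k X Y" using that int_point_mem_tri_iff[of i] i by simp_all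
    moreover from this have "\<not> (1 \<le> Y \<and> Y \<le> i - 1)" using no_strip by blast
    ultimately have "Y = 0 \<or> Y = i" "slope_window i k X Y" by linarith+
    then show ?thesis
      using i slope_window_bottom_row[of i k X] not_slope_window_top_row[of i k X] by auto
  qed
  then show "(0,0) \<in> tri i k \<and> (\<forall>X Y. (of_int X, of_int Y) \<in> tri i k \<longrightarrow> X = 0 \<and> Y = 0)"
    by (simp add: zero_mem_tri)
qed

lemma lattice_point_int_affine_map:
  "lattice_point p \<Longrightarrow> lattice_point (int_affine_map a b c d e f p)"
  unfolding lattice_point_def int_affine_map_def by auto

lemma inj_int_affine_map:
  assumes "a * d - b * c \<noteq> 0"
  shows "inj (int_affine_map a b c d e f)"
proof (rule injI)
  fix p q :: "real \<times> real"
  assume "int_affine_map a b c d e f p = int_affine_map a b c d e f q"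
  then have "of_int a * (fst p - fst q) + of_int b * (snd p - snd q) = 0"
    "of_int c * (fst p - fst q) + of_int d * (snd p - snd q) = 0"
    unfolding int_affine_map_def by (simp_all add: algebra_simps)
  then have "of_int (a * d - b * c) * (fst p - fst q) = 0"
    "of_int (a * d - b * c) * (snd p - snd q) = (0::real)"
    by (simp_all add: algebra_simps) algebra+
  moreover have "(of_int (a * d - b * c) :: real) \<noteq> 0" using assms of_int_eq_0_iff by blast
  ultimately show "p = q" by (simp add: prod_eq_iff)
qed

lemma lattice_free_if_lattice_equiv:
  assumes "lattice_equiv P Q" and "Q \<inter> {p. lattice_point p} = {(0,0)}" and "(0,0) \<in> P"
  shows "P \<inter> {p. lattice_point p} = {(0,0)}"
proof -
  obtain a b c d e f where "\<bar>a * d - b * c\<bar> = 1" and img: "int_affine_map a b c d e f ` P = Q"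
    using assms(1) unfolding lattice_equiv_def by blast
  then have inj: "inj (int_affine_map a b c d e f)" by (intro inj_int_affine_map) auto
  have origin: "lattice_point (0::real, 0::real)" unfolding lattice_point_def by simp
  have "int_affine_map a b c d e f p = (0,0)" if "p \<in> P" "lattice_point p" for p
    using that img assms(2) lattice_point_int_affine_map by blast
  then have "p = (0,0)" if "p \<in> P" "lattice_point p" for p
    using that assms(3) origin inj by (metis injD)
  then show ?thesis using assms(3) origin by blast
qed

lemma shear_image_tri: "int_affine_map 1 (-m) 0 1 0 0 ` tri i k = tri i (k - m*i)"
proof -
  have "linear (int_affine_map 1 (-m) 0 1 0 0)"
    by (rule linearI) (auto simp: int_affine_map_def algebra_simps)
  then have "int_affine_map 1 (-m) 0 1 0 0 ` tri i k
      = convex hull (int_affine_map 1 (-m) 0 1 0 0 ` {(0, 0), (of_int k + 1/2, of_int i), (of_int k + 4/5, of_int i)})"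
    unfolding tri_def by (rule convex_hull_linear_image)
  then show ?thesis unfolding tri_def by (simp add: int_affine_map_def algebra_simps)
qed

lemma lattice_equiv_tri_if_mod_eq:
  assumes "k mod i = k' mod i"
  shows "lattice_equiv (tri i k) (tri i k')"
proof -
  have "k' = k - (k div i - k' div i) * i"
    using assms div_mult_mod_eq[of k i] div_mult_mod_eq[of k' i] unfolding left_diff_distrib by linarith
  then show ?thesis
    unfolding lattice_equiv_def using shear_image_tri[of "k div i - k' div i" i k] by force
qed

lemma tri_lattice_free_iff_mod:
  assumes "i > 1"
  shows "tri i k \<inter> {p. lattice_point p} = {(0,0)} \<longleftrightarrow>
    k mod i = 0 \<or> k mod i = i - 1 \<or> even i \<and> k mod i = i div 2 - 1"
proof -
  have "2*r + 2 = i \<longleftrightarrow> even i \<and> r = i div 2 - 1" for r by presburger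
  then show ?thesis using tri_lattice_free_iff[OF assms] strip_lattice_point_iff[OF assms] by simp
qed

lemma tri_lattice_free_iff_lattice_equiv:
  assumes "i > 1"
  shows "tri i k \<inter> {p. lattice_point p} = {(0,0)} \<longleftrightarrow>
    lattice_equiv (tri i k) (tri i (-1)) \<or> lattice_equiv (tri i k) (tri i 0) \<or>
    (even i \<and> lattice_equiv (tri i k) (tri i (i div 2 - 1)))"
    (is "?free k \<longleftrightarrow> ?equiv")
proof -
  have residues: "(-1) mod i = i - 1" "0 mod i = 0" "even i \<Longrightarrow> (i div 2 - 1) mod i = i div 2 - 1"
    using assms by (simp_all add: zmod_minus1 mod_pos_pos_trivial)
  note free_iff = tri_lattice_free_iff_mod[OF assms]
  note transfer = lattice_free_if_lattice_equiv[OF _ _ zero_mem_tri]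
  show ?thesis
  proof
    assume "?free k"
    then consider "k mod i = (-1) mod i" | "k mod i = 0 mod i"
      | "even i" "k mod i = (i div 2 - 1) mod i"
      unfolding free_iff using residues by auto
    then show ?equiv by cases (simp_all add: lattice_equiv_tri_if_mod_eq)
  next
    assume ?equiv
    then show "?free k"
    proof (elim disjE conjE)
      show "?free k" if "lattice_equiv (tri i k) (tri i (-1))"
        using that by (rule transfer) (simp add: free_iff residues)
      show "?free k" if "lattice_equiv (tri i k) (tri i 0)"
        using that by (rule transfer) (simp add: free_iff residues)
      show "?free k" if "even i" "lattice_equiv (tri i k) (tri i (i div 2 - 1))"
        using that(2) by (rule transfer) (simp add: free_iff residues that(1))
    qed
  qed
qed

theorem mainTheorem13:
  fixes k i :: int
  assumes "i > 1"
  shows "(convex hull {(0, 0), (of_int k + 1/2, of_int i), (of_int k + 4/5, of_int i)}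
            \<inter> {p. lattice_point p} = {(0::real, 0::real)})
     \<longleftrightarrow>
     (lattice_equiv (convex hull {(0, 0), (of_int k + 1/2, of_int i), (of_int k + 4/5, of_int i)})
                    (convex hull {(0, 0), (-1/2, of_int i), (-1/5, of_int i)})
      \<or> lattice_equiv (convex hull {(0, 0), (of_int k + 1/2, of_int i), (of_int k + 4/5, of_int i)})
                    (convex hull {(0, 0), (1/2, of_int i), (4/5, of_int i)})
      \<or> (even i \<and>
         lattice_equiv (convex hull {(0, 0), (of_int k + 1/2, of_int i), (of_int k + 4/5, of_int i)})
                    (convex hull {(0, 0), (of_int i / 2 - 1/2, of_int i), (of_int i / 2 - 1/5, of_int i)})))"
proof -
  have "convex hull {(0, 0), (of_int i / 2 - 1/2, of_int i), (of_int i / 2 - 1/5, of_int i)}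
      = tri i (i div 2 - 1)" if "even i"
    using that unfolding tri_def by (auto simp: algebra_simps real_of_int_div)
  moreover have "convex hull {(0, 0), (-1/2, of_int i), (-1/5, of_int i)} = tri i (-1)"
    "convex hull {(0, 0), (1/2, of_int i), (4/5, of_int i)} = tri i 0"
    unfolding tri_def by (simp_all add: algebra_simps)
  ultimately show ?thesis
    unfolding tri_def[symmetric] using tri_lattice_free_iff_lattice_equiv[OF assms] by auto
qed

end
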